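(* Let $q=2^t$. Let $r+I\in\ker\pi_{P_1}\cap C_k(P,L)$, let $r^*\in R_P^*$ be its representative, and write $r^*=(1+x_3^{q-1})h$ with $h\in R_P^*$ not involving $x_3$. Then for every non-constant monomial $m$ of $h$, every digit of $m$ (in its 2-adic $t$-tuple) has degree exactly $1$.
   Context: Let $k=\mathbb{F}_q$, $q=2^t$, $V=k^4$ with coordinates $x_0,\dots,x_3$ relative to a symplectic basis $e_0,\dots,e_3$ of a nonsingular alternating form with $(e_0,e_3)=(e_1,e_2)=1$; $P$ the points (1-dim subspaces) and $L$ the totally isotropic 2-dim subspaces (lines). $R=k[x_0,\dots,x_3]$, $I=(x_i^q-x_i)_{i}$, $R^*$ the polynomials with each variable of degree $\le q-1$. $R_P^*$ is the $k$-span of monomials $x_0^{m_0}\cdots x_3^{m_3}$ with $0\le m_i\le q-1$ and $\sum m_i$ divisible by $q-1$; $R_P=\{f+I:f\in R_P^*\}$, identified with functions $P\to k$ by evaluation at nonzero vectors. For a line $\ell$, $\delta_\ell^*\in R_P^*$ is the polynomial representing the characteristic function of $\ell$ (value $1$ at $v\neq0$ iff $\langle v\rangle\in\ell$, else $0$), and $C_k(P,L)$ is the $k$-span of $\{\delta_\ell^*+I:\ell\in L\}$. $P_1$ is the set of points with $x_3$-coordinate nonzero and $\pi_{P_1}$ is restriction of functions to $P_1$. Any monomial $m=x_0^{m_0}x_1^{m_1}x_2^{m_2}x_3^{m_3}$ with $0\le m_i\le q-1$ has 2-adic $t$-tuple $[f_0,\dots,f_{t-1}]$, where, writing $m_i=\sum_{j=0}^{t-1}n_{i,j}2^j$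 with $n_{i,j}\in\{0,1\}$, the $j$-th digit is $f_j=x_0^{n_{0,j}}x_1^{n_{1,j}}x_2^{n_{2,j}}x_3^{n_{3,j}}$; thus $m=f_0f_1^2f_2^{4}\cdots f_{t-1}^{2^{t-1}}$. *)

theory Defs
  imports Main "HOL-Library.Cardinality"
begin

text \<open>Vectors of V = k^4: functions nat => k, supported on coordinates 0..3.\<close>
definition Vec :: "(nat \<Rightarrow> 'k::field) set" where
  "Vec = {v. \<forall>i\<ge>4. v i = 0}"

definition bform :: "(nat \<Rightarrow> 'k::field) \<Rightarrow> (nat \<Rightarrow> 'k) \<Rightarrow> 'k" where
  "bform u v = u 0 * v 3 - u 3 * v 0 + u 1 * v 2 - u 2 * v 1"

text \<open>Lines: totally isotropic 2-dimensional subspaces of V (as sets of vectors).\<close>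
definition is_line :: "(nat \<Rightarrow> 'k::field) set \<Rightarrow> bool" where
  "is_line S \<longleftrightarrow>
     (\<exists>u\<in>Vec. \<exists>w\<in>Vec. (\<forall>a b. (\<lambda>i. a * u i + b * w i) = (\<lambda>i. 0) \<longrightarrow> a = 0 \<and> b = 0)
        \<and> S = {x. \<exists>a b. x = (\<lambda>i. a * u i + b * w i)})
     \<and> (\<forall>x\<in>S. \<forall>y\<in>S. bform x y = 0)"

definition Lines :: "(nat \<Rightarrow> 'k::field) set set" where
  "Lines = {S. is_line S}"

text \<open>Exponent vectors of monomials in R^* (each exponent at most q-1).\<close>
definition exps :: "nat \<Rightarrow> (nat \<Rightarrow> nat) set" where
  "exps q = {e. (\<forall>i<4. e i \<le> q - 1) \<and> (\<forall>i\<ge>4. e i = 0)}"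

text \<open>Polynomials are coefficient functions on exponent vectors.
  A polynomial lies in R^* iff its support is contained in exps q.\<close>
definition in_Rstar :: "nat \<Rightarrow> ((nat \<Rightarrow> nat) \<Rightarrow> 'k::field) \<Rightarrow> bool" where
  "in_Rstar q p \<longleftrightarrow> (\<forall>e. p e \<noteq> 0 \<longrightarrow> e \<in> exps q)"

definition in_RPstar :: "nat \<Rightarrow> ((nat \<Rightarrow> nat) \<Rightarrow> 'k::field) \<Rightarrow> bool" where
  "in_RPstar q p \<longleftrightarrow> in_Rstar q p \<and> (\<forall>e. p e \<noteq> 0 \<longrightarrow> (q - 1) dvd (\<Sum>i<4. e i))"

text \<open>Evaluation of a polynomial in R^* at a vector (0^0 = 1).\<close>
definition peval :: "nat \<Rightarrow> ((nat \<Rightarrow> nat) \<Rightarrow> 'k::field) \<Rightarrow> (nat \<Rightarrow> 'k) \<Rightarrow> 'k" where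
  "peval q p v = (\<Sum>e\<in>exps q. p e * (\<Prod>i<4. v i ^ e i))"

definition pmul :: "nat \<Rightarrow> ((nat \<Rightarrow> nat) \<Rightarrow> 'k::field) \<Rightarrow> ((nat \<Rightarrow> nat) \<Rightarrow> 'k) \<Rightarrow> (nat \<Rightarrow> nat) \<Rightarrow> 'k" where
  "pmul q p1 p2 e = (\<Sum>a\<in>exps q. \<Sum>b\<in>exps q. if (\<lambda>i. a i + b i) = e then p1 a * p2 b else 0)"

definition one_plus_x3 :: "nat \<Rightarrow> (nat \<Rightarrow> nat) \<Rightarrow> 'k::field" where
  "one_plus_x3 q e = (if e = (\<lambda>i. 0) then 1 else 0)
                     + (if e = (\<lambda>i. if i = 3 then q - 1 else 0) then 1 else 0)"

text \<open>delta_l^* + I as a function on V: the characteristic function of the subspace l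
  (value 1 at v iff v is in l; in particular value 1 at 0).  C_k(P,L) is the span of these.\<close>
definition in_code :: "((nat \<Rightarrow> 'k::field) \<Rightarrow> 'k) \<Rightarrow> bool" where
  "in_code f \<longleftrightarrow> (\<exists>c :: (nat \<Rightarrow> 'k) set \<Rightarrow> 'k.
      \<forall>v\<in>Vec. f v = (\<Sum>S\<in>Lines. c S * (if v \<in> S then 1 else 0)))"

definition digit_deg :: "(nat \<Rightarrow> nat) \<Rightarrow> nat \<Rightarrow> nat" where
  "digit_deg e j = (\<Sum>i<4. (e i div 2 ^ j) mod 2)"

end

theory Submission
  imports Defs "HOL-Computational_Algebra.Polynomial"
begin

text \<open>
  The idea is to pair the codeword with the "dual monomial" \<open>\<Prod>_(i<3) x_i^(Q - e_i)\<close>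
  summed over \<open>V\<close>.  On one hand, if some digit of \<open>e\<close> has degree at least two, the dual
  monomial sums to zero over every line (Frobenius expansion plus a carry-free digit
  counting argument), so the pairing vanishes.  On the other hand, by the power sums of
  \<open>k\<close> the pairing equals the sum of the coefficients \<open>h_\<beta>\<close> of the monomials \<open>\<beta>\<close> that
  dominate \<open>e\<close>; an induction on the number of zero exponents shows it is \<open>h_e\<close>.  So no
  digit has degree \<open>\<ge> 2\<close>, and since the degree of \<open>e\<close> is a positive multiple of \<open>Q\<close>,
  all digits have degree exactly one.
\<close>

definition bitn :: "nat \<Rightarrow> nat \<Rightarrow> nat" where
  "bitn n j = n div 2 ^ j mod 2"

lemma bitn_cases: "bitn n j = 0 \<or> bitn n j = 1"
  by (auto simp: bitn_def)

lemma of_bool_bitn: "of_bool (bitn n j = 1) = bitn n j"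
  using bitn_cases[of n j] by auto

lemma binary_expansion:
  assumes "n < 2 ^ t"
  shows "n = (\<Sum>j<t. bitn n j * 2 ^ j)"
proof -
  have "n mod 2 ^ t = (\<Sum>j<t. bitn n j * 2 ^ j)" for t
  proof (induction t)
    case (Suc t)
    have "n mod (2 ^ t * 2) = 2 ^ t * bitn n t + n mod 2 ^ t"
      unfolding bitn_def by (rule mod_mult2_eq)
    then show ?case using Suc by (simp add: mult.commute)
  qed simp
  then show ?thesis using assms by (metis mod_less)
qed

lemma sum_powers_of_two: "(\<Sum>j<t. (2::nat) ^ j) = 2 ^ t - 1"
  by (induction t) auto

lemma complementary_digits:
  assumes "d + e = 2 ^ t - 1" and "j < t"
  shows "bitn d j + bitn e j = 1"
  using assms
proof (induction j arbitrary: t d e)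
  case 0
  then obtain p :: nat where "d + e + 1 = 2 * p" by (cases t) auto
  then show ?case unfolding bitn_def by simp presburger
next
  case (Suc j)
  then obtain t' where t: "t = Suc t'" and "d + e + 1 = 2 * 2 ^ t'" by (cases t) auto
  moreover have "d + e + 1 = 2 * p \<Longrightarrow> d div 2 + e div 2 = p - 1" for p :: nat
    by presburger
  ultimately have "d div 2 + e div 2 = 2 ^ t' - 1" by blast
  then have "bitn (d div 2) j + bitn (e div 2) j = 1" using Suc t by auto
  then show ?case by (simp add: bitn_def div_mult2_eq)
qed

text \<open>Digit counts with \<open>X_j + Y_j \<le> 3\<close> that both represent \<open>2^t - 1\<close> must be all ones:
  the lowest count is odd, hence \<open>1\<close>, and the rest represent \<open>2^(t-1) - 1\<close>.\<close>
lemma carry_free_all_ones: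
  assumes "\<forall>j<t. X j + Y j \<le> (3::nat)"
    and "(\<Sum>j<t. X j * 2 ^ j) = 2 ^ t - 1" and "(\<Sum>j<t. Y j * 2 ^ j) = 2 ^ t - 1"
    and "j < t"
  shows "X j = 1 \<and> Y j = 1"
  using assms
proof (induction t arbitrary: X Y j)
  case (Suc t)
  have split: "(\<Sum>j<Suc t. Z j * 2 ^ j) = Z 0 + 2 * (\<Sum>j<t. Z (Suc j) * 2 ^ j)" for Z :: "nat \<Rightarrow> nat"
    by (simp add: sum.lessThan_Suc_shift sum_distrib_left mult_ac del: sum.lessThan_Suc)
  have "0 < (2::nat) ^ t" by simp
  then have P: "(2::nat) ^ Suc t - 1 = 1 + 2 * (2 ^ t - 1)" by (simp only: power_Suc)
  have x: "X 0 + 2 * (\<Sum>j<t. X (Suc j) * 2 ^ j) = 1 + 2 * (2 ^ t - 1)"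
    and y: "Y 0 + 2 * (\<Sum>j<t. Y (Suc j) * 2 ^ j) = 1 + 2 * (2 ^ t - 1)"
    using Suc.prems(2,3) unfolding split P by simp_all
  have "X 0 + Y 0 \<le> 3" using Suc.prems(1) by simp
  moreover have "x + 2 * a = 1 + 2 * b \<Longrightarrow> y + 2 * c = 1 + 2 * b \<Longrightarrow> x + y \<le> 3
      \<Longrightarrow> x = 1 \<and> y = (1::nat)" for x y a b c :: nat
    by presburger
  ultimately have low: "X 0 = 1" "Y 0 = 1" using x y by blast+
  then have sums: "(\<Sum>j<t. X (Suc j) * 2 ^ j) = 2 ^ t - 1" "(\<Sum>j<t. Y (Suc j) * 2 ^ j) = 2 ^ t - 1"
    using x y by simp_all
  have bound: "\<forall>j<t. X (Suc j) + Y (Suc j) \<le> 3"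
    using Suc.prems(1) by simp
  have high: "X (Suc i) = 1 \<and> Y (Suc i) = 1" if "i < t" for i
    by (rule Suc.IH[of "\<lambda>j. X (Suc j)" "\<lambda>j. Y (Suc j)" i, OF bound sums that])
  show ?case
    using low high Suc.prems(4) by (cases j) auto
qed simp

lemma digits_all_one:
  assumes "\<forall>j<t. D j \<le> (1::nat)"
    and "0 < (\<Sum>j<t. D j * 2 ^ j)" and "(2 ^ t - 1) dvd (\<Sum>j<t. D j * 2 ^ j)"
    and "j < t"
  shows "D j = 1"
proof (rule ccontr)
  assume "D j \<noteq> 1"
  then have "(\<Sum>j<t. D j * 2 ^ j) < (\<Sum>j<t. 2 ^ j)"
    using assms(1,4) by (intro sum_strict_mono_ex1) (auto intro!: bexI[of _ j])
  moreover have "2 ^ t - 1 \<le> (\<Sum>j<t. D j * 2 ^ j)"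
    using assms(2,3) by (simp add: dvd_imp_le)
  ultimately show False by (simp add: sum_powers_of_two)
qed

lemma sum_of_binary_expansions:
  assumes "\<forall>i\<in>I. n i < 2 ^ t"
  shows "(\<Sum>i\<in>I. n i) = (\<Sum>j<t. (\<Sum>i\<in>I. bitn (n i) j) * 2 ^ j)"
proof -
  have "(\<Sum>i\<in>I. n i) = (\<Sum>i\<in>I. \<Sum>j<t. bitn (n i) j * 2 ^ j)"
    using assms binary_expansion by (intro sum.cong) auto
  also have "\<dots> = (\<Sum>j<t. (\<Sum>i\<in>I. bitn (n i) j) * 2 ^ j)"
    by (subst sum.swap) (simp add: sum_distrib_right)
  finally show ?thesis .
qed

lemma power_by_binary_digits:
  fixes x :: "'a::comm_monoid_mult"
  assumes "n < 2 ^ t"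
  shows "x ^ n = (\<Prod>j\<in>{j\<in>{..<t}. bitn n j = 1}. x ^ 2 ^ j)"
proof -
  have "(\<Sum>j\<in>{j\<in>{..<t}. bitn n j = 1}. (2::nat) ^ j) = (\<Sum>j<t. bitn n j * 2 ^ j)"
    by (subst sum.inter_filter) (auto intro!: sum.cong simp: bitn_def)
  also have "\<dots> = n"
    by (rule binary_expansion[OF assms, symmetric])
  finally show ?thesis
    by (metis power_sum)
qed

text \<open>Finite fields.  The characteristic divides the number of elements (translation by \<open>1\<close>
  permutes the ring), so \<open>|k| = 2^t\<close> forces characteristic two.\<close>
lemma of_nat_card_eq_0: "of_nat CARD('k) = (0::'k::{ring_1,finite})"
proof -
  have "(\<Sum>x\<in>(UNIV::'k set). x) = (\<Sum>x\<in>UNIV. x + 1)"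
    by (rule sum.reindex_bij_witness[of _ "\<lambda>x. x + 1" "\<lambda>x. x - 1"]) auto
  then show ?thesis by (simp add: sum.distrib)
qed

lemma char_two_of_card:
  assumes "CARD('k::{field,finite}) = 2 ^ t"
  shows "(2::'k) = 0" and "0 < t"
proof -
  have "(2::'k) ^ t = 0" using of_nat_card_eq_0[where 'k='k] assms by simp
  then show "(2::'k) = 0" "0 < t" by simp_all
qed

lemma finite_field_fermat:
  fixes x :: "'k::{field,finite}"
  assumes "x \<noteq> 0"
  shows "x ^ (CARD('k) - 1) = 1"
proof -
  let ?N = "UNIV - {0::'k}"
  have "(\<Prod>y\<in>?N. x * y) = (\<Prod>y\<in>?N. y)"
    by (rule prod.reindex_bij_witness[of _ "\<lambda>y. y / x" "\<lambda>y. x * y"]) (use assms in auto)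
  moreover have "card ?N = CARD('k) - 1" by (simp add: card_Diff_subset)
  ultimately show ?thesis by (simp add: prod.distrib)
qed

text \<open>If \<open>q - 1\<close> does not divide \<open>m > 0\<close>, some unit is not an \<open>m\<close>-th root of unity: otherwise
  every unit would be a root of \<open>x^r - 1\<close> with \<open>r = m mod (q - 1)\<close>, too many roots.\<close>
lemma finite_field_non_root:
  assumes "0 < m" and "\<not> (CARD('k) - 1) dvd m"
  obtains c :: "'k::{field,finite}" where "c \<noteq> 0" and "c ^ m \<noteq> 1"
proof -
  define r where "r = m mod (CARD('k) - 1)"
  have "card {0, 1::'k} \<le> CARD('k)" by (rule card_mono) auto
  then have r: "0 < r" "r < CARD('k) - 1"
    using assms by (auto simp: r_def dvd_eq_mod_eq_0 intro!: mod_less_divisor)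
  have "\<exists>c::'k. c \<noteq> 0 \<and> c ^ r \<noteq> 1"
  proof (rule ccontr)
    assume "\<not> ?thesis"
    then have roots: "UNIV - {0} \<subseteq> {x::'k. poly (monom 1 r - 1) x = 0}"
      by (auto simp: poly_monom)
    have "coeff (monom (1::'k) r - 1) r = 1"
      using r(1) by simp
    then have nz: "monom (1::'k) r - 1 \<noteq> 0"
      by (metis coeff_0 zero_neq_one)
    have "CARD('k) - 1 = card (UNIV - {0::'k})" by (simp add: card_Diff_subset)
    also have "\<dots> \<le> card {x::'k. poly (monom 1 r - 1) x = 0}" by (intro card_mono roots) auto
    also have "\<dots> \<le> degree (monom (1::'k) r - 1)" by (rule card_poly_roots_bound[OF nz])
    also have "\<dots> \<le> r" by (metis degree_diff_le degree_monom_le degree_1 le0)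
    finally show False using r(2) by simp
  qed
  then obtain c :: 'k where c: "c \<noteq> 0" "c ^ r \<noteq> 1" by blast
  have "c ^ m = c ^ ((CARD('k) - 1) * (m div (CARD('k) - 1)) + r)"
    by (simp add: r_def)
  also have "\<dots> = (c ^ (CARD('k) - 1)) ^ (m div (CARD('k) - 1)) * c ^ r"
    by (simp only: power_add power_mult)
  finally show ?thesis using that c finite_field_fermat[OF c(1)] by simp
qed

lemma finite_field_power_sum:
  "(\<Sum>x\<in>(UNIV::'k set). x ^ m)
     = (if 0 < m \<and> (CARD('k::{field,finite}) - 1) dvd m then -1 else 0)"
proof (cases "0 < m \<and> (CARD('k) - 1) dvd m")
  case True
  then obtain l where l: "m = (CARD('k) - 1) * l" by blast
  have "(\<Sum>x\<in>(UNIV::'k set). x ^ m) = (\<Sum>x\<in>UNIV - {0}. x ^ m)"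
    using True by (simp add: sum.remove[of UNIV 0])
  also have "\<dots> = (\<Sum>x\<in>UNIV - {0::'k}. 1)"
    using finite_field_fermat[where 'k='k] by (intro sum.cong) (auto simp: l power_mult)
  also have "\<dots> = of_nat CARD('k) - 1"
    by (simp add: card_Diff_subset of_nat_diff)
  finally show ?thesis using True of_nat_card_eq_0[where 'k='k] by simp
next
  case False
  show ?thesis
  proof (cases "m = 0")
    case True
    then show ?thesis using of_nat_card_eq_0[where 'k='k] by simp
  next
    case m: False
    obtain c :: 'k where c: "c \<noteq> 0" "c ^ m \<noteq> 1"
      using finite_field_non_root[of m] False m by auto
    have "(\<Sum>x\<in>(UNIV::'k set). x ^ m) = (\<Sum>x\<in>UNIV. (c * x) ^ m)"
      by (rule sum.reindex_bij_witness[of _ "\<lambda>x. c * x" "\<lambda>x. x / c"]) (use c in auto)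
    also have "\<dots> = c ^ m * (\<Sum>x\<in>UNIV. x ^ m)"
      by (simp add: power_mult_distrib sum_distrib_left)
    finally have "(1 - c ^ m) * (\<Sum>x\<in>(UNIV::'k set). x ^ m) = 0"
      by (simp add: algebra_simps)
    then show ?thesis using c False by simp
  qed
qed

lemma frobenius_char_two:
  fixes x y :: "'k::field"
  assumes "(2::'k) = 0"
  shows "(x + y) ^ 2 ^ j = x ^ 2 ^ j + y ^ 2 ^ j"
proof (induction j arbitrary: x y)
  case (Suc j)
  have square: "(a + b) ^ 2 = a ^ 2 + b ^ 2" for a b :: 'k
    using assms by (simp add: power2_eq_square algebra_simps mult_2[symmetric])
  show ?case using Suc square by (simp add: power_Suc2 power_mult)
qed simp

text \<open>A pair \<open>(i, j)\<close> stands for the \<open>j\<close>-th binary digit of the \<open>i\<close>-th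
  exponent; a set of such pairs has weight \<open>\<Sum> 2^j\<close>.\<close>
definition weight :: "(nat \<times> nat) set \<Rightarrow> nat" where
  "weight X = (\<Sum>p\<in>X. 2 ^ snd p)"

definition digit_positions :: "nat \<Rightarrow> (nat \<Rightarrow> nat) \<Rightarrow> nat set \<Rightarrow> (nat \<times> nat) set" where
  "digit_positions t f I = Sigma I (\<lambda>i. {j\<in>{..<t}. bitn (f i) j = 1})"

lemma finite_digit_positions: "finite I \<Longrightarrow> finite (digit_positions t f I)"
  by (simp add: digit_positions_def)

lemma weight_by_level:
  assumes "finite X" and "snd ` X \<subseteq> {..<t}"
  shows "weight X = (\<Sum>j<t. card {p\<in>X. snd p = j} * 2 ^ j)"
proof -
  have "weight X = (\<Sum>j<t. \<Sum>p\<in>{p\<in>X. snd p = j}. 2 ^ snd p)"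
    unfolding weight_def using sum.group[OF assms(1) _ assms(2), of "\<lambda>p. (2::nat) ^ snd p"] by simp
  also have "\<dots> = (\<Sum>j<t. card {p\<in>X. snd p = j} * 2 ^ j)"
    by (intro sum.cong refl) simp
  finally show ?thesis .
qed

lemma digit_positions_level:
  assumes "finite I" and "j < t"
  shows "card {p\<in>digit_positions t f I. snd p = j} = (\<Sum>i\<in>I. bitn (f i) j)"
proof -
  have level: "{p\<in>digit_positions t f I. snd p = j} = (\<lambda>i. (i, j)) ` {i\<in>I. bitn (f i) j = 1}"
    using assms(2) by (auto simp: digit_positions_def)
  have "card {p\<in>digit_positions t f I. snd p = j} = card {i\<in>I. bitn (f i) j = 1}"
    unfolding level by (intro card_image inj_onI) simp
  also have "\<dots> = (\<Sum>i\<in>I. of_bool (bitn (f i) j = 1))"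
    using assms(1) by (simp add: Int_def)
  also have "\<dots> = (\<Sum>i\<in>I. bitn (f i) j)"
    by (simp only: of_bool_bitn)
  finally show ?thesis .
qed

text \<open>Then the
  one-digits of the complements \<open>Q - e_i\<close> cannot be split into two parts whose weights are
  both positive multiples of \<open>Q\<close>: the three weights would each be exactly \<open>Q\<close>, so the
  two parts would have one digit per level, leaving exactly one \<open>e_i\<close>-digit per level.\<close>
lemma no_balanced_split:
  fixes t j0 :: nat and e :: "nat \<Rightarrow> nat" and X :: "(nat \<times> nat) set"
  defines "Q \<equiv> 2 ^ t - 1"
  defines "D \<equiv> digit_positions t (\<lambda>i. Q - e i) {..<3}"
  assumes e_le: "\<forall>i<3. e i \<le> Q" and e_dvd: "Q dvd (\<Sum>i<3. e i)"
    and heavy: "j0 < t" "2 \<le> (\<Sum>i<3. bitn (e i) j0)"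
    and X: "X \<subseteq> D"
  shows "\<not> (0 < weight X \<and> Q dvd weight X \<and> 0 < weight (D - X) \<and> Q dvd weight (D - X))"
proof
  assume balanced: "0 < weight X \<and> Q dvd weight X \<and> 0 < weight (D - X) \<and> Q dvd weight (D - X)"
  define Y where "Y = D - X"
  define level where "level Z j = card {p\<in>Z. snd p = j}" for Z :: "(nat \<times> nat) set" and j
  define E where "E j = (\<Sum>i<3. bitn (e i) j)" for j
  have D: "finite D" "snd ` D \<subseteq> {..<t}"
    by (auto simp: D_def digit_positions_def)
  then have XY: "finite X" "finite Y" "snd ` X \<subseteq> {..<t}" "snd ` Y \<subseteq> {..<t}"
    using X by (auto simp: Y_def intro: finite_subset)
  have e_lt: "\<forall>i\<in>{..<3}. e i < 2 ^ t"
    using e_le by (simp add: Q_def less_eq_iff_succ_less)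
  have levels: "level X j + level Y j + E j = 3" if "j < t" for j
  proof -
    have "{p\<in>D. snd p = j} = {p\<in>X. snd p = j} \<union> {p\<in>Y. snd p = j}"
      using X by (auto simp: Y_def)
    then have "level X j + level Y j = card {p\<in>D. snd p = j}"
      using XY by (simp add: level_def card_Un_disjoint Y_def disjoint_iff)
    also have "\<dots> = (\<Sum>i<3. bitn (Q - e i) j)"
      unfolding D_def using that by (simp add: digit_positions_level)
    finally have "level X j + level Y j + E j = (\<Sum>i<3. bitn (Q - e i) j + bitn (e i) j)"
      by (simp add: E_def sum.distrib)
    also have "\<dots> = (\<Sum>i<3::nat. 1)"
      using e_le that by (intro sum.cong refl complementary_digits) (auto simp: Q_def)
    finally show ?thesis by simp
  qed
  have "weight X + weight Y + (\<Sum>i<3. e i) = (\<Sum>j<t. (level X j + level Y j + E j) * 2 ^ j)"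
    using XY sum_of_binary_expansions[OF e_lt]
    by (simp add: weight_by_level level_def E_def sum.distrib algebra_simps)
  also have "\<dots> = 3 * Q"
    using levels by (simp add: Q_def sum_powers_of_two sum_distrib_left[symmetric])
  finally have total: "weight X + weight Y + (\<Sum>i<3. e i) = 3 * Q" .
  have "0 < (\<Sum>i<3. e i)"
  proof (rule ccontr)
    assume "\<not> ?thesis"
    then have "\<forall>i<3. e i = 0" by simp
    then show False using heavy(2) by (simp add: bitn_def)
  qed
  then have "Q \<le> weight X" "Q \<le> weight Y" "Q \<le> (\<Sum>i<3. e i)"
    using balanced e_dvd by (auto simp: Y_def dvd_imp_le)
  then have "weight X = Q" "weight Y = Q"
    using total by linarith+
  then have "(\<Sum>j<t. level X j * 2 ^ j) = 2 ^ t - 1" "(\<Sum>j<t. level Y j * 2 ^ j) = 2 ^ t - 1"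
    using XY by (simp_all add: weight_by_level level_def Q_def)
  moreover have "\<forall>j<t. level X j + level Y j \<le> 3"
    using levels by (metis le_add1)
  ultimately have "level X j0 = 1 \<and> level Y j0 = 1"
    using heavy(1) by (intro carry_free_all_ones[where t=t])
  then show False
    using levels[OF heavy(1)] heavy(2) by (simp add: E_def)
qed

lemma char_two_product_expansion:
  fixes x y :: "nat \<Rightarrow> 'k::field"
  assumes "(2::'k) = 0" and "finite I" and "\<forall>i\<in>I. f i < 2 ^ t"
  defines "D \<equiv> digit_positions t f I"
  shows "(\<Prod>i\<in>I. (x i + y i) ^ f i)
    = (\<Sum>X\<in>Pow D. (\<Prod>p\<in>X. x (fst p) ^ 2 ^ snd p) * (\<Prod>p\<in>D - X. y (fst p) ^ 2 ^ snd p))"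
proof -
  have "(\<Prod>i\<in>I. (x i + y i) ^ f i) = (\<Prod>i\<in>I. \<Prod>j\<in>{j\<in>{..<t}. bitn (f i) j = 1}. (x i + y i) ^ 2 ^ j)"
    using assms(3) by (intro prod.cong refl power_by_binary_digits) simp
  also have "\<dots> = (\<Prod>i\<in>I. \<Prod>j\<in>{j\<in>{..<t}. bitn (f i) j = 1}. x i ^ 2 ^ j + y i ^ 2 ^ j)"
    by (simp add: frobenius_char_two[OF assms(1)])
  also have "\<dots> = (\<Prod>p\<in>D. x (fst p) ^ 2 ^ snd p + y (fst p) ^ 2 ^ snd p)"
    unfolding D_def digit_positions_def using assms(2) by (subst prod.Sigma) (auto simp: split_def)
  also have "\<dots> = (\<Sum>X\<in>Pow D. (\<Prod>p\<in>X. x (fst p) ^ 2 ^ snd p) * (\<Prod>p\<in>D - X. y (fst p) ^ 2 ^ snd p))"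
    using assms(2) by (simp add: D_def finite_digit_positions prod_add)
  finally show ?thesis .
qed

text \<open>The dual monomial \<open>x_0^(Q-e_0) x_1^(Q-e_1) x_2^(Q-e_2)\<close> sums to zero over every line
  \<open>{a u + b w}\<close> when \<open>e\<close> has a digit of degree at least two: after expansion, each term is
  a product of two power sums, and by the combinatorial core one of them always vanishes.\<close>
lemma line_sum_vanishes:
  fixes u w :: "nat \<Rightarrow> 'k::{field,finite}" and e :: "nat \<Rightarrow> nat"
  assumes q: "CARD('k) = 2 ^ t"
    and e_le: "\<forall>i<3. e i \<le> 2 ^ t - 1" and e_dvd: "(2 ^ t - 1) dvd (\<Sum>i<3. e i)"
    and heavy: "j0 < t" "2 \<le> (\<Sum>i<3. bitn (e i) j0)"
  shows "(\<Sum>a\<in>UNIV. \<Sum>b\<in>UNIV. \<Prod>i<3. (a * u i + b * w i) ^ (2 ^ t - 1 - e i)) = 0"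
proof -
  define D where "D = digit_positions t (\<lambda>i. 2 ^ t - 1 - e i) {..<3}"
  define U where "U X = (\<Prod>p\<in>X. u (fst p) ^ 2 ^ snd p)" for X
  define W where "W X = (\<Prod>p\<in>X. w (fst p) ^ 2 ^ snd p)" for X
  have scale: "(\<Prod>p\<in>X. (c * z (fst p)) ^ 2 ^ snd p) = c ^ weight X * (\<Prod>p\<in>X. z (fst p) ^ 2 ^ snd p)"
    for c :: 'k and z X
    by (simp add: weight_def power_mult_distrib prod.distrib power_sum)
  have expand: "(\<Prod>i<3. (a * u i + b * w i) ^ (2 ^ t - 1 - e i))
      = (\<Sum>X\<in>Pow D. U X * W (D - X) * (a ^ weight X * b ^ weight (D - X)))" for a b :: 'k
    unfolding D_def U_def W_def
    by (subst char_two_product_expansion[OF char_two_of_card(1)[OF q]])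
       (auto simp: scale less_imp_diff_less mult_ac)
  have "(\<Sum>a\<in>UNIV. \<Sum>b\<in>UNIV. \<Prod>i<3. (a * u i + b * w i) ^ (2 ^ t - 1 - e i))
      = (\<Sum>X\<in>Pow D. U X * W (D - X) * ((\<Sum>a\<in>UNIV. a ^ weight X) * (\<Sum>b\<in>UNIV. b ^ weight (D - X))))"
  proof -
    have "(\<Sum>a\<in>UNIV. \<Sum>b\<in>UNIV. \<Prod>i<3. (a * u i + b * w i) ^ (2 ^ t - 1 - e i))
        = (\<Sum>X\<in>Pow D. \<Sum>a\<in>UNIV. \<Sum>b\<in>UNIV. U X * W (D - X) * (a ^ weight X * b ^ weight (D - X)))"
      unfolding expand by (subst sum.swap, rule sum.cong[OF refl], rule sum.swap)
    also have "\<dots> = (\<Sum>X\<in>Pow D. U X * W (D - X) * ((\<Sum>a\<in>UNIV. a ^ weight X) * (\<Sum>b\<in>UNIV. b ^ weight (D - X))))"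
      by (intro sum.cong refl) (simp only: sum_product, simp only: sum_distrib_left)
    finally show ?thesis .
  qed
  also have "\<dots> = 0"
  proof (intro sum.neutral ballI)
    fix X assume "X \<in> Pow D"
    then have "\<not> (0 < weight X \<and> (2 ^ t - 1) dvd weight X \<and> 0 < weight (D - X) \<and> (2 ^ t - 1) dvd weight (D - X))"
      unfolding D_def by (intro no_balanced_split[OF e_le e_dvd heavy]) auto
    then show "U X * W (D - X) * ((\<Sum>a\<in>UNIV. a ^ weight X) * (\<Sum>b\<in>UNIV. b ^ weight (D - X))) = (0::'k)"
      by (auto simp: finite_field_power_sum q)
  qed
  finally show ?thesis .
qed

definition vec4 :: "'k \<Rightarrow> 'k \<Rightarrow> 'k \<Rightarrow> 'k \<Rightarrow> nat \<Rightarrow> 'k::zero" where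
  "vec4 a b c d i = (if i = 0 then a else if i = 1 then b else if i = 2 then c else if i = 3 then d else 0)"

lemma vec4_simps [simp]:
  "vec4 a b c d 0 = a" "vec4 a b c d 1 = b" "vec4 a b c d 2 = c" "vec4 a b c d 3 = d"
  "vec4 a b c d (Suc 0) = b"
  by (simp_all add: vec4_def)

lemma vec4_bij: "bij_betw (\<lambda>(a, b, c, d). vec4 a b c d) UNIV (Vec :: (nat \<Rightarrow> 'k::field) set)"
proof (rule bij_betw_byWitness[where f' = "\<lambda>v. (v 0, v 1, v 2, v 3)"])
  show "\<forall>v\<in>Vec. (\<lambda>(a, b, c, d). vec4 a b c d) (v 0, v 1, v 2, (v 3::'k)) = v"
    by (auto simp: vec4_def Vec_def fun_eq_iff)
  show "(\<lambda>(a, b, c, d). vec4 a b c d) ` UNIV \<subseteq> (Vec :: (nat \<Rightarrow> 'k) set)"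
    by (auto simp: vec4_def Vec_def)
  show "\<forall>x\<in>UNIV. (\<lambda>v. (v 0, v 1, v 2, v 3)) ((\<lambda>(a, b, c, d). vec4 a b c (d::'k)) x) = x"
    by (simp add: split_def)
qed simp

lemma finite_Vec: "finite (Vec :: (nat \<Rightarrow> 'k::{field,finite}) set)"
  using bij_betw_finite[OF vec4_bij[where 'k='k]] by simp

lemma sum_UNIV_prod:
  "(\<Sum>x\<in>(UNIV::('a::finite \<times> 'b::finite) set). g x) = (\<Sum>a\<in>UNIV. \<Sum>b\<in>UNIV. g (a, b))"
  by (simp add: sum.cartesian_product)

lemma sum_over_Vec:
  fixes F :: "(nat \<Rightarrow> 'k::{field,finite}) \<Rightarrow> 'r::comm_monoid_add"
  shows "(\<Sum>v\<in>Vec. F v) = (\<Sum>a\<in>UNIV. \<Sum>b\<in>UNIV. \<Sum>c\<in>UNIV. \<Sum>d\<in>UNIV. F (vec4 a b c d))"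
proof -
  have "(\<Sum>v\<in>Vec. F v) = (\<Sum>x\<in>UNIV. F ((\<lambda>(a, b, c, d). vec4 a b c d) x))"
    by (rule sum.reindex_bij_betw[OF vec4_bij, symmetric])
  then show ?thesis
    by (simp add: sum_UNIV_prod)
qed

lemma line_subset_Vec: "S \<in> Lines \<Longrightarrow> S \<subseteq> Vec"
  unfolding Lines_def is_line_def Vec_def by auto

lemma sum_over_line:
  fixes G :: "(nat \<Rightarrow> 'k::{field,finite}) \<Rightarrow> 'r::comm_monoid_add"
  assumes "S \<in> Lines"
  obtains u w :: "nat \<Rightarrow> 'k"
  where "(\<Sum>v\<in>S. G v) = (\<Sum>a\<in>UNIV. \<Sum>b\<in>UNIV. G (\<lambda>i. a * u i + b * w i))"
proof -
  obtain u w :: "nat \<Rightarrow> 'k" where indep: "\<forall>a b. (\<lambda>i. a * u i + b * w i) = (\<lambda>i. 0) \<longrightarrow> a = 0 \<and> b = 0"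
    and S: "S = {x. \<exists>a b. x = (\<lambda>i. a * u i + b * w i)}"
    using assms unfolding Lines_def is_line_def by auto
  define L where "L = (\<lambda>(a, b). (\<lambda>i. a * u i + b * w i))"
  have "inj L"
  proof (rule injI)
    fix x y assume eq: "L x = L y"
    obtain a b a' b' where xy: "x = (a, b)" "y = (a', b')" by fastforce
    have "(\<lambda>i. (a - a') * u i + (b - b') * w i) = (\<lambda>i. 0)"
      using eq xy by (auto simp: L_def fun_eq_iff algebra_simps dest: fun_cong)
    then have "a - a' = 0 \<and> b - b' = 0" using indep by blast
    then show "x = y" using xy by simp
  qed
  moreover have "L ` UNIV = S"
    unfolding S L_def by auto
  ultimately have "bij_betw L UNIV S"
    by (rule bij_betw_imageI)
  then have "(\<Sum>v\<in>S. G v) = (\<Sum>a\<in>UNIV. \<Sum>b\<in>UNIV. G (\<lambda>i. a * u i + b * w i))"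
    by (simp add: sum.reindex_bij_betw[symmetric] sum_UNIV_prod L_def)
  then show ?thesis by (rule that)
qed

lemma code_orthogonal:
  fixes F G :: "(nat \<Rightarrow> 'k::{field,finite}) \<Rightarrow> 'k"
  assumes "in_code F" and "\<And>S. S \<in> Lines \<Longrightarrow> (\<Sum>v\<in>S. G v) = 0"
  shows "(\<Sum>v\<in>Vec. F v * G v) = 0"
proof -
  obtain c where c: "\<forall>v\<in>Vec. F v = (\<Sum>S\<in>Lines. c S * (if v \<in> S then 1 else 0))"
    using assms(1) unfolding in_code_def by blast
  have "(\<Sum>v\<in>Vec. F v * G v) = (\<Sum>v\<in>Vec. \<Sum>S\<in>Lines. c S * (if v \<in> S then G v else 0))"
    using c by (auto simp: sum_distrib_right intro!: sum.cong)
  also have "\<dots> = (\<Sum>S\<in>Lines. c S * (\<Sum>v\<in>Vec \<inter> S. G v))"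
    by (subst sum.swap) (simp add: sum_distrib_left sum.inter_restrict[OF finite_Vec])
  also have "\<dots> = 0"
    by (intro sum.neutral ballI) (simp add: Int_absorb1 line_subset_Vec assms(2))
  finally show ?thesis .
qed

lemma finite_exps: "finite (exps q)"
proof (rule finite_subset)
  show "exps q \<subseteq> {f. \<forall>x. (x \<in> {..<4::nat} \<longrightarrow> f x \<in> {..q - 1}) \<and> (x \<notin> {..<4} \<longrightarrow> f x = 0)}"
    unfolding exps_def by auto
qed (intro finite_set_of_finite_funs; simp)

lemma peval_pmul:
  fixes p1 p2 :: "(nat \<Rightarrow> nat) \<Rightarrow> 'k::field"
  assumes closed: "\<And>a b. a \<in> exps q \<Longrightarrow> b \<in> exps q \<Longrightarrow> p1 a \<noteq> 0 \<Longrightarrow> p2 b \<noteq> 0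
      \<Longrightarrow> (\<lambda>i. a i + b i) \<in> exps q"
  shows "peval q (pmul q p1 p2) v = peval q p1 v * peval q p2 v"
proof -
  define M where "M e = (\<Prod>i<4. v i ^ e i)" for e :: "nat \<Rightarrow> nat"
  have "peval q (pmul q p1 p2) v
      = (\<Sum>c\<in>exps q. \<Sum>a\<in>exps q. \<Sum>b\<in>exps q. if (\<lambda>i. a i + b i) = c then p1 a * p2 b * M c else 0)"
    unfolding peval_def pmul_def M_def by (simp add: sum_distrib_right if_distrib[of "\<lambda>x. x * _"] cong: if_cong)
  also have "\<dots> = (\<Sum>a\<in>exps q. \<Sum>b\<in>exps q. \<Sum>c\<in>exps q. if (\<lambda>i. a i + b i) = c then p1 a * p2 b * M c else 0)"
    by (subst sum.swap, rule sum.cong[OF refl], rule sum.swap)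
  also have "\<dots> = (\<Sum>a\<in>exps q. \<Sum>b\<in>exps q. if (\<lambda>i. a i + b i) \<in> exps q then p1 a * p2 b * M (\<lambda>i. a i + b i) else 0)"
    by (simp add: sum.delta'[OF finite_exps])
  also have "\<dots> = (\<Sum>a\<in>exps q. \<Sum>b\<in>exps q. (p1 a * M a) * (p2 b * M b))"
  proof (intro sum.cong refl)
    fix a b assume ab: "a \<in> exps q" "b \<in> exps q"
    have "M (\<lambda>i. a i + b i) = M a * M b"
      unfolding M_def by (simp add: power_add prod.distrib)
    then show "(if (\<lambda>i. a i + b i) \<in> exps q then p1 a * p2 b * M (\<lambda>i. a i + b i) else 0) = (p1 a * M a) * (p2 b * M b)"
      using closed[OF ab] by (auto simp: mult_ac)
  qed
  also have "\<dots> = peval q p1 v * peval q p2 v"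
    unfolding peval_def M_def by (simp add: sum_product)
  finally show ?thesis .
qed

lemma peval_one_plus_x3: "peval q (one_plus_x3 q) v = 1 + v 3 ^ (q - 1)"
proof -
  define E3 where "E3 = (\<lambda>i::nat. if i = 3 then q - 1 else (0::nat))"
  define M where "M e = (\<Prod>i<4. v i ^ e i)" for e :: "nat \<Rightarrow> nat"
  have zero_exp: "(\<lambda>i. 0) \<in> exps q" and E3_exp: "E3 \<in> exps q"
    by (simp_all add: exps_def E3_def)
  have "peval q (one_plus_x3 q) v = (\<Sum>e\<in>exps q. (if e = (\<lambda>i. 0) then M e else 0) + (if e = E3 then M e else 0))"
    unfolding peval_def one_plus_x3_def M_def E3_def by (intro sum.cong refl) (simp add: distrib_right)
  also have "\<dots> = M (\<lambda>i. 0) + M E3"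
    using zero_exp E3_exp by (simp add: sum.distrib sum.delta[OF finite_exps])
  also have "\<dots> = 1 + v 3 ^ (q - 1)"
    unfolding M_def E3_def by (simp add: lessThan_nat_numeral)
  finally show ?thesis .
qed

lemma peval_factor_one_plus_x3:
  fixes h :: "(nat \<Rightarrow> nat) \<Rightarrow> 'k::field"
  assumes "\<forall>e. h e \<noteq> 0 \<longrightarrow> e 3 = 0"
  shows "peval q (pmul q (one_plus_x3 q) h) v = (1 + v 3 ^ (q - 1)) * peval q h v"
proof -
  have "(\<lambda>i. a i + b i) \<in> exps q"
    if "a \<in> exps q" "b \<in> exps q" "one_plus_x3 q a \<noteq> (0::'k)" "h b \<noteq> 0" for a b
  proof -
    have "a = (\<lambda>i. 0) \<or> a = (\<lambda>i. if i = 3 then q - 1 else 0)"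
      using that(3) unfolding one_plus_x3_def by (auto split: if_splits)
    then show ?thesis
      using that(2,4) assms unfolding exps_def by auto
  qed
  then show ?thesis
    by (simp add: peval_pmul peval_one_plus_x3)
qed

lemma peval_without_x3:
  fixes h :: "(nat \<Rightarrow> nat) \<Rightarrow> 'k::field"
  assumes "\<forall>e. h e \<noteq> 0 \<longrightarrow> e 3 = 0"
  shows "peval q h v = (\<Sum>b\<in>exps q. h b * (v 0 ^ b 0 * v 1 ^ b 1 * v 2 ^ b 2))"
  unfolding peval_def
proof (intro sum.cong refl)
  fix b :: "nat \<Rightarrow> nat"
  show "h b * (\<Prod>i<4. v i ^ b i) = h b * (v 0 ^ b 0 * v 1 ^ b 1 * v 2 ^ b 2)"
    using assms by (cases "h b = 0") (auto simp: lessThan_nat_numeral mult_ac)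
qed

lemma power_sum_char_two:
  assumes "CARD('k::{field,finite}) = 2 ^ t"
  shows "(\<Sum>x\<in>(UNIV::'k::{field,finite} set). x ^ m) = of_bool (0 < m \<and> (2 ^ t - 1) dvd m)"
proof -
  have "-(1::'k) = 1"
    using char_two_of_card(1)[OF assms] by (metis add_eq_0_iff2 one_add_one)
  then show ?thesis
    using assms by (simp add: finite_field_power_sum)
qed

text \<open>Summing \<open>(1 + x_3^Q) h\<close> against a monomial \<open>x_0^(f_0) x_1^(f_1) x_2^(f_2)\<close> over \<open>V\<close> picks
  out the coefficients \<open>h_\<beta>\<close> with every \<open>\<beta>_i + f_i\<close> a positive multiple of \<open>Q\<close>
  (the factor \<open>1 + x_3^Q\<close> contributes \<open>\<Sum>d. 1 + d^Q = 1\<close>).\<close>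
lemma pairing_with_dual_monomial:
  fixes h :: "(nat \<Rightarrow> nat) \<Rightarrow> 'k::{field,finite}" and f :: "nat \<Rightarrow> nat"
  assumes q: "CARD('k) = 2 ^ t" and h_no_x3: "\<forall>e. h e \<noteq> 0 \<longrightarrow> e 3 = 0"
  shows "(\<Sum>v\<in>Vec. (1 + v 3 ^ (2 ^ t - 1)) * peval CARD('k) h v * (\<Prod>i<3. v i ^ f i))
       = (\<Sum>\<beta>\<in>exps CARD('k). h \<beta> * (\<Prod>i<3. of_bool (0 < \<beta> i + f i \<and> (2 ^ t - 1) dvd (\<beta> i + f i))))"
proof -
  define Q :: nat where "Q = 2 ^ t - 1"
  define S where "S m = (\<Sum>x\<in>(UNIV::'k set). x ^ m)" for m
  have S: "S m = of_bool (0 < m \<and> Q dvd m)" for m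
    unfolding S_def Q_def by (rule power_sum_char_two[OF q])
  have "(2::nat) ^ 1 \<le> 2 ^ t"
    using char_two_of_card(2)[OF q] by (intro power_increasing) auto
  then have "0 < Q" by (simp add: Q_def)
  define mono where "mono \<beta> v = v 0 ^ (\<beta> 0 + f 0) * v 1 ^ (\<beta> 1 + f 1) * v 2 ^ (\<beta> 2 + f 2) * (1 + v 3 ^ Q)"
    for \<beta> :: "nat \<Rightarrow> nat" and v :: "nat \<Rightarrow> 'k"
  have mono_sum: "(\<Sum>v\<in>Vec. mono \<beta> v) = S (\<beta> 0 + f 0) * S (\<beta> 1 + f 1) * S (\<beta> 2 + f 2) * (S 0 + S Q)" for \<beta>
  proof -
    have "(\<Sum>v\<in>Vec. mono \<beta> v) = (\<Sum>a\<in>UNIV. \<Sum>b\<in>UNIV. \<Sum>c\<in>UNIV. \<Sum>d\<in>UNIV.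
        a ^ (\<beta> 0 + f 0) * b ^ (\<beta> 1 + f 1) * c ^ (\<beta> 2 + f 2) * (1 + d ^ Q))"
      by (simp add: sum_over_Vec mono_def)
    also have "\<dots> = S (\<beta> 0 + f 0) * S (\<beta> 1 + f 1) * S (\<beta> 2 + f 2) * (\<Sum>d\<in>UNIV. 1 + d ^ Q)"
      unfolding S_def by (simp only: sum_distrib_left[symmetric] sum_distrib_right[symmetric])
    also have "(\<Sum>d\<in>(UNIV::'k set). 1 + d ^ Q) = S 0 + S Q"
      by (simp add: S_def sum.distrib)
    finally show ?thesis .
  qed
  have "(\<Sum>v\<in>Vec. (1 + v 3 ^ Q) * peval CARD('k) h v * (\<Prod>i<3. v i ^ f i))
      = (\<Sum>v\<in>Vec. \<Sum>\<beta>\<in>exps CARD('k). h \<beta> * mono \<beta> v)"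
    unfolding peval_without_x3[OF h_no_x3] mono_def
    by (intro sum.cong refl) (simp add: sum_distrib_left sum_distrib_right lessThan_nat_numeral power_add mult_ac)
  also have "\<dots> = (\<Sum>\<beta>\<in>exps CARD('k). h \<beta> * (\<Sum>v\<in>Vec. mono \<beta> v))"
    by (subst sum.swap) (simp add: sum_distrib_left)
  also have "\<dots> = (\<Sum>\<beta>\<in>exps CARD('k). h \<beta> * (\<Prod>i<3. of_bool (0 < \<beta> i + f i \<and> Q dvd (\<beta> i + f i))))"
    using \<open>0 < Q\<close> by (simp add: mono_sum S lessThan_nat_numeral mult_ac)
  finally show ?thesis unfolding Q_def .
qed

lemma complementary_multiple:
  fixes b e Q :: nat
  assumes "b \<le> Q" and "e \<le> Q" and "0 < b + (Q - e)" and "Q dvd b + (Q - e)"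
  shows "b = e \<or> (e = 0 \<and> b = Q)"
proof -
  obtain k where k: "b + (Q - e) = Q * k"
    using assms(4) by blast
  then have "0 < k" "0 < Q"
    using assms(3) by (auto intro: gr0I)
  moreover have "Q * k \<le> Q * 2"
    using k assms(1,2) by linarith
  ultimately have "k = 1 \<or> k = 2"
    by auto
  then show ?thesis
    using k assms(1,2) by auto
qed

text \<open>Hence the monomials \<open>\<beta> \<noteq> e\<close> picked out by the dual monomial of \<open>e\<close> are obtained from
  \<open>e\<close> by raising some zero exponents to \<open>Q\<close>: they have every digit degree at least that
  of \<open>e\<close> and strictly fewer zero exponents among \<open>x_0, x_1, x_2\<close>.\<close>
lemma dominating_exponents:
  fixes \<beta> e :: "nat \<Rightarrow> nat"
  assumes exps: "\<beta> \<in> exps q" "e \<in> exps q" and no_x3: "\<beta> 3 = 0" "e 3 = 0" and "\<beta> \<noteq> e"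
    and match: "\<forall>i<3. 0 < \<beta> i + (q - 1 - e i) \<and> (q - 1) dvd (\<beta> i + (q - 1 - e i))"
  shows "digit_deg e j \<le> digit_deg \<beta> j"
    and "card {i. i < 3 \<and> \<beta> i = 0} < card {i. i < 3 \<and> e i = 0}"
proof -
  have raised: "\<beta> i = e i \<or> (e i = 0 \<and> \<beta> i = q - 1)" if "i < 3" for i
    using exps match that by (intro complementary_multiple) (auto simp: exps_def)
  have outside: "\<beta> i = 0 \<and> e i = 0" if "3 \<le> i" for i
    using exps no_x3 that by (cases "i = 3") (auto simp: exps_def)
  have agree: "\<beta> i = e i \<or> e i = 0" for i
    using raised outside by (meson not_le)
  show "digit_deg e j \<le> digit_deg \<beta> j"
    unfolding digit_deg_def
  proof (rule sum_mono)
    fix i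
    show "e i div 2 ^ j mod 2 \<le> \<beta> i div 2 ^ j mod 2"
      using agree[of i] by auto
  qed
  obtain i0 where i0: "\<beta> i0 \<noteq> e i0"
    using \<open>\<beta> \<noteq> e\<close> by blast
  then have "i0 < 3"
    using outside[of i0] by (cases "i0 < 3") auto
  then have "e i0 = 0" "\<beta> i0 = q - 1"
    using raised i0 by blast+
  moreover have "0 < q - 1"
  proof (rule ccontr)
    assume "\<not> 0 < q - 1"
    then show False
      using match \<open>i0 < 3\<close> by auto
  qed
  ultimately have "i0 \<in> {i. i < 3 \<and> e i = 0} - {i. i < 3 \<and> \<beta> i = 0}"
    using \<open>i0 < 3\<close> by simp
  moreover have "{i. i < 3 \<and> \<beta> i = 0} \<subseteq> {i. i < 3 \<and> e i = 0}"
  proof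
    fix i assume "i \<in> {i. i < 3 \<and> \<beta> i = 0}"
    then show "i \<in> {i. i < 3 \<and> e i = 0}"
      using agree[of i] by auto
  qed
  ultimately have "{i. i < 3 \<and> \<beta> i = 0} \<subset> {i. i < 3 \<and> e i = 0}"
    by blast
  then show "card {i. i < 3 \<and> \<beta> i = 0} < card {i. i < 3 \<and> e i = 0}"
    by (rule psubset_card_mono[rotated]) simp
qed

lemma code_annihilates_dual_monomial:
  fixes F :: "(nat \<Rightarrow> 'k::{field,finite}) \<Rightarrow> 'k" and e :: "nat \<Rightarrow> nat"
  assumes q: "CARD('k) = 2 ^ t" and code: "in_code F"
    and e_le: "\<forall>i<3. e i \<le> 2 ^ t - 1" and e_dvd: "(2 ^ t - 1) dvd (\<Sum>i<3. e i)"
    and heavy: "j < t" "2 \<le> (\<Sum>i<3. bitn (e i) j)"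
  shows "(\<Sum>v\<in>Vec. F v * (\<Prod>i<3. v i ^ (2 ^ t - 1 - e i))) = 0"
proof (rule code_orthogonal[OF code])
  define dual where "dual v = (\<Prod>i<3. v i ^ (2 ^ t - 1 - e i))" for v :: "nat \<Rightarrow> 'k"
  fix S :: "(nat \<Rightarrow> 'k) set"
  assume "S \<in> Lines"
  then obtain u w :: "nat \<Rightarrow> 'k"
    where "(\<Sum>v\<in>S. dual v) = (\<Sum>a\<in>UNIV. \<Sum>b\<in>UNIV. dual (\<lambda>i. a * u i + b * w i))"
    by (rule sum_over_line)
  then show "(\<Sum>v\<in>S. \<Prod>i<3. v i ^ (2 ^ t - 1 - e i)) = 0"
    using line_sum_vanishes[OF q e_le e_dvd heavy] by (simp add: dual_def)
qed

lemma digit_deg_without_x3: "e 3 = 0 \<Longrightarrow> digit_deg e j = (\<Sum>i<3. bitn (e i) j)"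
  by (simp add: digit_deg_def bitn_def lessThan_nat_numeral)

text \<open>Induction on the number of zero exponents: pairing with the dual monomial of a
  heavy \<open>e\<close> gives \<open>0\<close>, but also gives \<open>h_e\<close>, since every other contributing \<open>\<beta>\<close> is heavy
  with fewer zeros and so has \<open>h_\<beta> = 0\<close>.\<close>
lemma support_has_light_digits:
  fixes h :: "(nat \<Rightarrow> nat) \<Rightarrow> 'k::{field,finite}"
  assumes q: "CARD('k) = 2 ^ t"
    and code: "in_code (\<lambda>v. (1 + v 3 ^ (2 ^ t - 1)) * peval CARD('k) h v)"
    and h_RP: "in_RPstar CARD('k) h" and h_no_x3: "\<forall>e. h e \<noteq> 0 \<longrightarrow> e 3 = 0"
  shows "h e \<noteq> 0 \<Longrightarrow> j < t \<Longrightarrow> digit_deg e j \<le> 1"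
proof (induction e arbitrary: j rule: measure_induct_rule[where f="\<lambda>e. card {i. i < 3 \<and> e i = 0}"])
  case (less e)
  define Q :: nat where "Q = 2 ^ t - 1"
  define c :: "(nat \<Rightarrow> nat) \<Rightarrow> 'k" where
    "c \<beta> = (\<Prod>i<3. of_bool (0 < \<beta> i + (Q - e i) \<and> Q dvd (\<beta> i + (Q - e i))))" for \<beta>
  have support: "\<beta> \<in> exps CARD('k) \<and> Q dvd (\<Sum>i<4. \<beta> i) \<and> \<beta> 3 = 0" if "h \<beta> \<noteq> 0" for \<beta>
    using h_RP h_no_x3 q that by (auto simp: in_RPstar_def in_Rstar_def Q_def)
  have "e \<in> exps CARD('k) \<and> Q dvd (\<Sum>i<4. e i) \<and> e 3 = 0"
    using support[OF less.prems(1)] .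
  then have e: "e \<in> exps CARD('k)" "e 3 = 0" "\<forall>i<3. e i \<le> Q" "Q dvd (\<Sum>i<3. e i)"
    using q by (auto simp: exps_def Q_def lessThan_nat_numeral)
  show ?case
  proof (rule ccontr)
    assume "\<not> digit_deg e j \<le> 1"
    then have heavy: "2 \<le> (\<Sum>i<3. bitn (e i) j)"
      using e(2) by (simp add: digit_deg_without_x3)
    have "(\<Sum>\<beta>\<in>exps CARD('k). h \<beta> * c \<beta>)
        = (\<Sum>v\<in>Vec. (1 + v 3 ^ Q) * peval CARD('k) h v * (\<Prod>i<3. v i ^ (Q - e i)))"
      unfolding c_def Q_def by (rule pairing_with_dual_monomial[OF q h_no_x3, symmetric])
    also have "\<dots> = 0"
      using code_annihilates_dual_monomial[OF q code] e(3,4) heavy less.prems(2)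
      by (simp add: Q_def)
    finally have vanish: "(\<Sum>\<beta>\<in>exps CARD('k). h \<beta> * c \<beta>) = 0" .
    have "h \<beta> * c \<beta> = 0" if "\<beta> \<noteq> e" for \<beta>
    proof (rule ccontr)
      assume "h \<beta> * c \<beta> \<noteq> 0"
      then have "h \<beta> \<noteq> 0" and match: "\<forall>i<3. 0 < \<beta> i + (Q - e i) \<and> Q dvd (\<beta> i + (Q - e i))"
        by (auto simp: c_def)
      then have "digit_deg e j \<le> digit_deg \<beta> j"
        and "card {i. i < 3 \<and> \<beta> i = 0} < card {i. i < 3 \<and> e i = 0}"
        using dominating_exponents[of \<beta> "CARD('k)" e] support e(1,2) \<open>\<beta> \<noteq> e\<close> q
        by (auto simp: Q_def)
      then show False
        using less.IH \<open>h \<beta> \<noteq> 0\<close> less.prems(2) \<open>\<not> digit_deg e j \<le> 1\<close> by fastforce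
    qed
    moreover have "c e = 1"
    proof -
      have "(1::nat) < 2 ^ t"
        using less.prems(2) by (intro one_less_power) auto
      then show ?thesis
        unfolding c_def using e(3) by (intro prod.neutral ballI) (auto simp: Q_def)
    qed
    ultimately have "(\<Sum>\<beta>\<in>exps CARD('k). h \<beta> * c \<beta>) = h e"
      using e(1) by (simp add: sum.remove[OF finite_exps] sum.neutral)
    then show False
      using vanish less.prems(1) by simp
  qed
qed

lemma light_exponent_all_ones:
  assumes "e \<in> exps (2 ^ t)" and "e \<noteq> (\<lambda>i. 0)" and "(2 ^ t - 1) dvd (\<Sum>i<4. e i)"
    and light: "\<forall>j<t. digit_deg e j \<le> 1" and "j < t"
  shows "digit_deg e j = 1"
proof (rule digits_all_one[where D = "digit_deg e", OF light _ _ \<open>j < t\<close>])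
  have "\<forall>i\<in>{..<4}. e i < 2 ^ t"
    using assms(1) by (auto simp: exps_def less_eq_iff_succ_less)
  then have expand: "(\<Sum>i<4. e i) = (\<Sum>j<t. digit_deg e j * 2 ^ j)"
    by (simp add: sum_of_binary_expansions digit_deg_def bitn_def)
  obtain i where "e i \<noteq> 0"
    using assms(2) by blast
  then have "i < 4"
    using assms(1) by (auto simp: exps_def not_less[symmetric])
  then have "e i \<le> (\<Sum>i<4. e i)"
    by (intro member_le_sum) auto
  then show "0 < (\<Sum>j<t. digit_deg e j * 2 ^ j)"
    using \<open>e i \<noteq> 0\<close> expand by simp
  show "(2 ^ t - 1) dvd (\<Sum>j<t. digit_deg e j * 2 ^ j)"
    using assms(3) expand by simp
qed

text \<open>The theorem.\<close>
theorem lemma10: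
  fixes t :: nat
    and rs h :: "(nat \<Rightarrow> nat) \<Rightarrow> 'k::{field,finite}"
  assumes q: "CARD('k) = 2 ^ t"
    and rs_RP: "in_RPstar CARD('k) rs"
    and code: "in_code (peval CARD('k) rs)"
    and ker: "\<forall>v\<in>Vec. v 3 \<noteq> 0 \<longrightarrow> peval CARD('k) rs v = 0"
    and h_RP: "in_RPstar CARD('k) h"
    and h_no_x3: "\<forall>e. h e \<noteq> 0 \<longrightarrow> e 3 = 0"
    and fact: "rs = pmul CARD('k) (one_plus_x3 CARD('k)) h"
  shows "\<forall>e. h e \<noteq> 0 \<longrightarrow> e \<noteq> (\<lambda>i. 0) \<longrightarrow> (\<forall>j<t. digit_deg e j = 1)"
proof (intro allI impI)
  fix e :: "nat \<Rightarrow> nat" and j :: nat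
  assume "h e \<noteq> 0" and "e \<noteq> (\<lambda>i. 0)" and "j < t"
  have "peval CARD('k) rs = (\<lambda>v. (1 + v 3 ^ (2 ^ t - 1)) * peval CARD('k) h v)"
    using peval_factor_one_plus_x3[OF h_no_x3] by (simp add: fact q fun_eq_iff)
  then have light: "\<forall>j<t. digit_deg e j \<le> 1"
    using support_has_light_digits[OF q _ h_RP h_no_x3] code \<open>h e \<noteq> 0\<close> by simp
  have "e \<in> exps (2 ^ t)" and "(2 ^ t - 1) dvd (\<Sum>i<4. e i)"
    using h_RP \<open>h e \<noteq> 0\<close> q by (auto simp: in_RPstar_def in_Rstar_def)
  then show "digit_deg e j = 1"
    using light_exponent_all_ones \<open>e \<noteq> (\<lambda>i. 0)\<close> light \<open>j < t\<close> by blast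
qed

end
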